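(* There exist absolute constants $0<\tau<10^{-4}$, $c\ge\tau$ and $n_0$ such that for every $n\ge n_0$ the following holds. Let $K\subseteq\mathbb{R}^n$ be a convex set with $|\mathrm{vol}(K)-1/2|\le c/n$ such that some point $x\notin K$ has $\|x\|_2\le\tau$. Then, viewing $K$ as $K:\mathbb{R}^n\to\{-1,1\}$, $\mathsf{W}^{\le1}[K]\ge 1/18$.
   Context: $\mathrm{vol}(K)=\Pr_{\mathbf{g}\sim N(0,I_n)}[\mathbf{g}\in K]$. $K(x)=1$ if $x\in K$ and $-1$ otherwise. For $S\in\mathbb{N}^n$, $H_S(x)=\prod_i h_{S_i}(x_i)$ with $h_j$ the normalized univariate Hermite polynomials; $\tilde f(S)=\mathbf{E}_{\mathbf{g}\sim N(0,I_n)}[f(\mathbf{g})H_S(\mathbf{g})]$, $|S|=\sum_iS_i$, and $\mathsf{W}^{\le1}[f]=\sum_{|S|\le1}\tilde f(S)^2$. *)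

theory Defs
  imports "HOL-Probability.Probability"
begin

text \<open>Points of R^n are represented as extensional functions nat => real supported on {..<n}.\<close>

definition Rn :: "nat \<Rightarrow> (nat \<Rightarrow> real) set" where
  "Rn n = PiE {..<n} (\<lambda>_. UNIV)"

text \<open>Standard Gaussian measure N(0,I_n), completed so that every convex set is measurable.\<close>
definition gauss :: "nat \<Rightarrow> (nat \<Rightarrow> real) measure" where
  "gauss n = completion (PiM {..<n} (\<lambda>_. density lborel std_normal_density))"

definition convex_Rn :: "nat \<Rightarrow> (nat \<Rightarrow> real) set \<Rightarrow> bool" where
  "convex_Rn n K \<longleftrightarrow> K \<subseteq> Rn n \<and>
     (\<forall>x\<in>K. \<forall>y\<in>K. \<forall>t::real. 0 \<le> t \<and> t \<le> 1 \<longrightarrow>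
        (\<lambda>i\<in>{..<n}. (1 - t) * x i + t * y i) \<in> K)"

definition gvol :: "nat \<Rightarrow> (nat \<Rightarrow> real) set \<Rightarrow> real" where
  "gvol n K = measure (gauss n) K"

definition enorm :: "nat \<Rightarrow> (nat \<Rightarrow> real) \<Rightarrow> real" where
  "enorm n x = sqrt (\<Sum>i<n. (x i)\<^sup>2)"

definition pm_ind :: "(nat \<Rightarrow> real) set \<Rightarrow> (nat \<Rightarrow> real) \<Rightarrow> real" where
  "pm_ind K x = (if x \<in> K then 1 else -1)"

text \<open>Normalized univariate Hermite polynomials of degree 0 and 1: h_0 = 1, h_1(x) = x.
  Multi-index S with |S| \<le> 1 is either 0 or e_i; H_0 = 1, H_{e_i}(x) = x_i.\<close>
definition hermite_coeff0 :: "nat \<Rightarrow> ((nat \<Rightarrow> real) \<Rightarrow> real) \<Rightarrow> real" where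
  "hermite_coeff0 n f = integral\<^sup>L (gauss n) f"

definition hermite_coeff1 :: "nat \<Rightarrow> ((nat \<Rightarrow> real) \<Rightarrow> real) \<Rightarrow> nat \<Rightarrow> real" where
  "hermite_coeff1 n f i = integral\<^sup>L (gauss n) (\<lambda>x. f x * x i)"

definition W_le1 :: "nat \<Rightarrow> ((nat \<Rightarrow> real) \<Rightarrow> real) \<Rightarrow> real" where
  "W_le1 n f = (hermite_coeff0 n f)\<^sup>2 + (\<Sum>i<n. (hermite_coeff1 n f i)\<^sup>2)"

end

theory Submission
  imports Defs
begin

text \<open>A point \<open>x \<notin> K\<close> with \<open>\<parallel>x\<parallel> \<le> \<tau>\<close> gives, by convexity, a unit vector \<open>v\<close> with
  \<open>K \<subseteq> {y. \<langle>v, y\<rangle> \<le> 2\<tau>}\<close>. Then \<open>Y = \<langle>v, g\<rangle>\<close> is standard normal, and a set of measure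
  about \<open>1/2\<close> inside \<open>{Y \<le> 2\<tau>}\<close> must be close to \<open>{Y < 0}\<close>, so
  \<open>E[K(g) Y] = 2 E[1\<^sub>K Y] \<approx> -E|Y| = -\<surd>(2/\<pi>) < -0.66\<close>. But \<open>E[K(g) Y]\<close> is the combination
  with coefficients \<open>v\<^sub>i\<close> of the degree-one Hermite coefficients of \<open>K\<close>, so by Cauchy-Schwarz
  their squares sum to at least \<open>0.66\<^sup>2 > 1/18\<close>.\<close>

section \<open>Separating a point from a convex set\<close>

definition inner_Rn :: "nat \<Rightarrow> (nat \<Rightarrow> real) \<Rightarrow> (nat \<Rightarrow> real) \<Rightarrow> real" where
  "inner_Rn n u w = (\<Sum>i<n. u i * w i)"

definition sqdist_Rn :: "nat \<Rightarrow> (nat \<Rightarrow> real) \<Rightarrow> (nat \<Rightarrow> real) \<Rightarrow> real" where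
  "sqdist_Rn n u w = (\<Sum>i<n. (u i - w i)\<^sup>2)"

definition lerp_Rn :: "nat \<Rightarrow> real \<Rightarrow> (nat \<Rightarrow> real) \<Rightarrow> (nat \<Rightarrow> real) \<Rightarrow> nat \<Rightarrow> real" where
  "lerp_Rn n t x y = (\<lambda>i\<in>{..<n}. (1 - t) * x i + t * y i)"

lemma convex_Rn_lerp:
  "convex_Rn n K \<Longrightarrow> x \<in> K \<Longrightarrow> y \<in> K \<Longrightarrow> 0 \<le> t \<Longrightarrow> t \<le> 1 \<Longrightarrow> lerp_Rn n t x y \<in> K"
  unfolding convex_Rn_def lerp_Rn_def by blast

lemma sqdist_Rn_nonneg: "0 \<le> sqdist_Rn n u w"
  unfolding sqdist_Rn_def by (auto intro: sum_nonneg)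

lemma sqdist_Rn_ge_coordinate: "i < n \<Longrightarrow> (u i - w i)\<^sup>2 \<le> sqdist_Rn n u w"
  unfolding sqdist_Rn_def by (rule member_le_sum) auto

lemma sqdist_Rn_lerp:
  "sqdist_Rn n (lerp_Rn n s p u) z =
     sqdist_Rn n p z + 2 * s * (\<Sum>i<n. (p i - z i) * (u i - p i)) + s\<^sup>2 * sqdist_Rn n u p"
proof -
  have "sqdist_Rn n (lerp_Rn n s p u) z =
      (\<Sum>i<n. (p i - z i)\<^sup>2 + 2 * s * ((p i - z i) * (u i - p i)) + s\<^sup>2 * (u i - p i)\<^sup>2)"
    unfolding sqdist_Rn_def lerp_Rn_def
    by (intro sum.cong) (auto simp: power2_eq_square algebra_simps)
  then show ?thesis
    by (simp add: sqdist_Rn_def sum.distrib sum_distrib_left)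
qed

lemma nonneg_if_linear_nonneg_on_unit_interval:
  fixes A B :: real
  assumes "\<And>s. 0 < s \<Longrightarrow> s \<le> 1 \<Longrightarrow> 0 \<le> A + s * B"
  shows "0 \<le> A"
proof (rule ccontr)
  assume "\<not> 0 \<le> A"
  then have A: "0 < - A" by simp
  define s where "s = min 1 (- A / (\<bar>B\<bar> + 1))"
  have pos: "0 < - A / (\<bar>B\<bar> + 1)"
    using A by (intro divide_pos_pos) simp_all
  then have s: "0 < s" "s \<le> 1"
    by (auto simp: s_def)
  have "s * \<bar>B\<bar> \<le> - A / (\<bar>B\<bar> + 1) * \<bar>B\<bar>"
    by (intro mult_right_mono) (auto simp: s_def)
  also have "\<dots> = - A - - A / (\<bar>B\<bar> + 1)"
    by (simp add: field_simps)
  also have "\<dots> < - A"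
    using pos by simp
  finally have "A + s * B < 0"
    using mult_left_mono[OF abs_ge_self[of B], of s] s by linarith
  with assms[OF s] show False by simp
qed

lemma bounded_family_convergent_subseq:
  fixes f :: "nat \<Rightarrow> nat \<Rightarrow> real"
  assumes "finite I" "\<And>k i. i \<in> I \<Longrightarrow> \<bar>f k i\<bar> \<le> B"
  shows "\<exists>r. strict_mono r \<and> (\<forall>i\<in>I. convergent (\<lambda>k. f (r k) i))"
  using assms
proof (induction I rule: finite_induct)
  case empty
  have "strict_mono (id :: nat \<Rightarrow> nat)" by (simp add: strict_mono_def)
  then show ?case by blast
next
  case (insert j I)
  then obtain r where r: "strict_mono r" "\<forall>i\<in>I. convergent (\<lambda>k. f (r k) i)" by auto
  obtain r' where r': "strict_mono r'" "monoseq (\<lambda>k. f (r (r' k)) j)"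
    using seq_monosub[of "\<lambda>k. f (r k) j"] by blast
  have "Bseq (\<lambda>k. f (r (r' k)) j)"
    using insert.prems by (intro BseqI'[of _ B]) auto
  then have "convergent (\<lambda>k. f (r (r' k)) j)"
    using r' Bseq_monoseq_convergent by blast
  moreover have "convergent (\<lambda>k. f (r (r' k)) i)" if "i \<in> I" for i
    using convergent_subseq_convergent[OF r(2)[rule_format, OF that] r'(1)] by (simp add: o_def)
  moreover have "strict_mono (\<lambda>k. r (r' k))"
    using strict_mono_o[OF r(1) r'(1)] by (simp add: o_def)
  ultimately show ?case by blast
qed

text \<open>The infimum of the distance from \<open>z\<close> to \<open>K\<close> need not be attained since \<open>K\<close> need not be
  closed; a limit \<open>p\<close> of a minimising sequence still beats every point on every segment from
  \<open>p\<close> into \<open>K\<close>, as these segments are limits of segments inside \<open>K\<close>.\<close>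
lemma convex_Rn_nearest_point_limit:
  assumes conv: "convex_Rn n K" and ne: "K \<noteq> {}"
  shows "\<exists>p. sqdist_Rn n p z = (INF y\<in>K. sqdist_Rn n y z) \<and>
    (\<forall>u\<in>K. \<forall>s. 0 \<le> s \<and> s \<le> 1 \<longrightarrow> sqdist_Rn n p z \<le> sqdist_Rn n (lerp_Rn n s p u) z)"
proof -
  define D where "D = (INF y\<in>K. sqdist_Rn n y z)"
  have bdd: "bdd_below ((\<lambda>y. sqdist_Rn n y z) ` K)"
    using sqdist_Rn_nonneg by (intro bdd_belowI2)
  have D_le: "D \<le> sqdist_Rn n y z" if "y \<in> K" for y
    unfolding D_def using bdd that by (rule cINF_lower)
  have "\<exists>y. y \<in> K \<and> sqdist_Rn n y z < D + 1 / Suc k" for k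
    using cINF_less_iff[OF ne bdd, of "D + 1 / Suc k"] unfolding D_def by auto
  then obtain y where yK: "\<And>k. y k \<in> K" and yD: "\<And>k. sqdist_Rn n (y k) z < D + 1 / Suc k"
    by metis
  have "\<bar>y k i - z i\<bar> \<le> sqrt (D + 1)" if "i < n" for k i
  proof (rule real_le_rsqrt)
    have "1 / real (Suc k) \<le> 1" by simp
    then have "(y k i - z i)\<^sup>2 \<le> D + 1"
      using sqdist_Rn_ge_coordinate[OF that, of "y k" z] yD[of k] by linarith
    then show "\<bar>y k i - z i\<bar>\<^sup>2 \<le> D + 1" by simp
  qed
  then obtain r where r: "strict_mono r"
    and conv_r: "\<And>i. i < n \<Longrightarrow> convergent (\<lambda>k. y (r k) i - z i)"
    using bounded_family_convergent_subseq[of "{..<n}" "\<lambda>k i. y k i - z i" "sqrt (D + 1)"] by auto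
  define p where "p i = lim (\<lambda>k. y (r k) i - z i) + z i" for i
  have yp: "(\<lambda>k. y (r k) i) \<longlonglongrightarrow> p i" if "i < n" for i
    using tendsto_add[OF conv_r[OF that, unfolded convergent_LIMSEQ_iff] tendsto_const[of "z i"]]
    by (simp add: p_def)
  have lim_p: "(\<lambda>k. sqdist_Rn n (y (r k)) z) \<longlonglongrightarrow> sqdist_Rn n p z"
    unfolding sqdist_Rn_def by (intro tendsto_intros yp) auto
  have "(\<lambda>k. D + 1 / real (Suc (r k))) \<longlonglongrightarrow> D + 0"
    using LIMSEQ_subseq_LIMSEQ[OF LIMSEQ_Suc[OF lim_inverse_n'] r]
    by (intro tendsto_intros) (simp add: o_def)
  then have "sqdist_Rn n p z \<le> D"
    using yD by (intro LIMSEQ_le[OF lim_p]) (auto intro: less_imp_le)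
  moreover have "D \<le> sqdist_Rn n p z"
    using D_le yK by (intro LIMSEQ_le_const[OF lim_p]) auto
  ultimately have pD: "sqdist_Rn n p z = D" by simp
  show ?thesis
  proof (intro exI conjI ballI allI impI)
    show "sqdist_Rn n p z = (INF y\<in>K. sqdist_Rn n y z)" using pD by (simp add: D_def)
  next
    fix u and s :: real assume u: "u \<in> K" and s: "0 \<le> s \<and> s \<le> 1"
    have "(\<lambda>k. sqdist_Rn n (lerp_Rn n s (y (r k)) u) z) \<longlonglongrightarrow> sqdist_Rn n (lerp_Rn n s p u) z"
      unfolding sqdist_Rn_def lerp_Rn_def by (auto intro!: tendsto_intros yp)
    then have "D \<le> sqdist_Rn n (lerp_Rn n s p u) z"
      using D_le convex_Rn_lerp[OF conv yK u] s by (intro LIMSEQ_le_const) auto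
    with pD show "sqdist_Rn n p z \<le> sqdist_Rn n (lerp_Rn n s p u) z" by simp
  qed
qed

lemma convex_Rn_separate_distant_point:
  assumes conv: "convex_Rn n K" and ne: "K \<noteq> {}"
    and d: "0 < d" "\<And>y. y \<in> K \<Longrightarrow> d \<le> sqdist_Rn n y z"
  shows "\<exists>w. 0 < (\<Sum>i<n. (w i)\<^sup>2) \<and> (\<forall>y\<in>K. inner_Rn n w y < inner_Rn n w z)"
proof -
  obtain p where p_inf: "sqdist_Rn n p z = (INF y\<in>K. sqdist_Rn n y z)"
    and p_min: "\<And>u s. u \<in> K \<Longrightarrow> 0 \<le> s \<Longrightarrow> s \<le> 1 \<Longrightarrow>
                  sqdist_Rn n p z \<le> sqdist_Rn n (lerp_Rn n s p u) z"
    using convex_Rn_nearest_point_limit[OF conv ne, of z] by blast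
  define w where "w i = z i - p i" for i
  have "d \<le> (INF y\<in>K. sqdist_Rn n y z)"
    by (rule cINF_greatest[OF ne d(2)])
  moreover have "(\<Sum>i<n. (w i)\<^sup>2) = sqdist_Rn n p z"
    unfolding w_def sqdist_Rn_def by (simp add: power2_commute)
  ultimately have w_pos: "0 < (\<Sum>i<n. (w i)\<^sup>2)"
    using d(1) p_inf by simp
  have "0 \<le> (\<Sum>i<n. (p i - z i) * (u i - p i))" if u: "u \<in> K" for u
  proof -
    define A where "A = (\<Sum>i<n. (p i - z i) * (u i - p i))"
    have "0 \<le> 2 * A + s * sqdist_Rn n u p" if "0 < s" "s \<le> 1" for s
    proof -
      have "0 \<le> s * (2 * A + s * sqdist_Rn n u p)"
        using p_min[OF u, of s] that unfolding sqdist_Rn_lerp A_def[symmetric]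
        by (simp add: power2_eq_square algebra_simps)
      with \<open>0 < s\<close> show ?thesis by (simp add: zero_le_mult_iff)
    qed
    then have "0 \<le> 2 * A"
      by (rule nonneg_if_linear_nonneg_on_unit_interval)
    then show ?thesis by (simp add: A_def)
  qed
  moreover have "inner_Rn n w z - inner_Rn n w y =
      (\<Sum>i<n. (p i - z i) * (y i - p i)) + (\<Sum>i<n. (w i)\<^sup>2)" for y
  proof -
    have "inner_Rn n w z - inner_Rn n w y = (\<Sum>i<n. (p i - z i) * (y i - p i) + (w i)\<^sup>2)"
      unfolding inner_Rn_def sum_subtractf[symmetric]
      by (intro sum.cong) (auto simp: w_def power2_eq_square algebra_simps)
    then show ?thesis by (simp add: sum.distrib)
  qed
  ultimately have "inner_Rn n w y < inner_Rn n w z" if "y \<in> K" for y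
    using w_pos that by (smt (verit))
  with w_pos show ?thesis by blast
qed

lemma abs_inner_Rn_le_enorm:
  assumes v: "(\<Sum>i<n. (v i)\<^sup>2) = 1"
  shows "\<bar>inner_Rn n v x\<bar> \<le> enorm n x"
proof -
  have "\<bar>inner_Rn n v x\<bar> \<le> (\<Sum>i<n. \<bar>v i\<bar> * \<bar>x i\<bar>)"
    unfolding inner_Rn_def by (rule order_trans[OF sum_abs]) (simp add: abs_mult)
  also have "\<dots> \<le> L2_set v {..<n} * L2_set x {..<n}"
    by (rule L2_set_mult_ineq)
  also have "\<dots> = enorm n x"
    using v by (simp add: L2_set_def enorm_def)
  finally show ?thesis .
qed

text \<open>Since \<open>K\<close> need not be closed, \<open>x \<notin> K\<close> may lie at distance \<open>0\<close> from \<open>K\<close>. Instead one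
  finds a vertex of the cube \<open>x + [-\<epsilon>, \<epsilon>]\<^sup>n\<close> that is not \<open>\<eta>\<close>-approximated by \<open>K\<close>:
  otherwise, collapsing one coordinate at a time by convex combinations of approximants of
  opposite vertices would put \<open>x\<close> itself into \<open>K\<close>.\<close>
definition cube_approx ::
    "nat \<Rightarrow> (nat \<Rightarrow> real) set \<Rightarrow> (nat \<Rightarrow> real) \<Rightarrow> real \<Rightarrow> real \<Rightarrow> nat \<Rightarrow> bool" where
  "cube_approx n K x \<epsilon> \<eta> m \<longleftrightarrow> (\<forall>s :: nat \<Rightarrow> bool. \<exists>q\<in>K.
     (\<forall>i<m. \<bar>q i - x i - (if s i then \<epsilon> else - \<epsilon>)\<bar> \<le> \<eta>) \<and> (\<forall>i. m \<le> i \<and> i < n \<longrightarrow> q i = x i))"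

lemma cube_approx_Suc_imp:
  assumes conv: "convex_Rn n K" and "\<eta> < \<epsilon>" "m < n" and approx: "cube_approx n K x \<epsilon> \<eta> (Suc m)"
  shows "cube_approx n K x \<epsilon> \<eta> m"
  unfolding cube_approx_def
proof
  fix s :: "nat \<Rightarrow> bool"
  define e where "e i = (if s i then \<epsilon> else - \<epsilon>)" for i
  obtain q_pos where q_pos: "q_pos \<in> K" "\<forall>i. Suc m \<le> i \<and> i < n \<longrightarrow> q_pos i = x i"
    and near_pos: "\<forall>i<Suc m. \<bar>q_pos i - x i - (if (s(m := True)) i then \<epsilon> else - \<epsilon>)\<bar> \<le> \<eta>"
    using approx unfolding cube_approx_def by (elim allE[of _ "s(m := True)"]) blast
  obtain q_neg where q_neg: "q_neg \<in> K" "\<forall>i. Suc m \<le> i \<and> i < n \<longrightarrow> q_neg i = x i"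
    and near_neg: "\<forall>i<Suc m. \<bar>q_neg i - x i - (if (s(m := False)) i then \<epsilon> else - \<epsilon>)\<bar> \<le> \<eta>"
    using approx unfolding cube_approx_def by (elim allE[of _ "s(m := False)"]) blast
  have near: "\<bar>q_pos i - x i - e i\<bar> \<le> \<eta>" "\<bar>q_neg i - x i - e i\<bar> \<le> \<eta>" if "i < m" for i
    using near_pos[rule_format, of i] near_neg[rule_format, of i] that by (simp_all add: e_def)
  have sides: "q_neg m < x m" "x m < q_pos m"
    using near_pos[rule_format, of m] near_neg[rule_format, of m] \<open>\<eta> < \<epsilon>\<close> by auto
  define t where "t = (q_pos m - x m) / (q_pos m - q_neg m)"
  have t: "0 \<le> t" "t \<le> 1"
    using sides by (auto simp: t_def field_simps)
  have "t * (q_pos m - q_neg m) = q_pos m - x m"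
    using sides by (simp add: t_def)
  then have t_hits: "(1 - t) * q_pos m + t * q_neg m = x m"
    by (simp add: algebra_simps)
  define q where "q = lerp_Rn n t q_pos q_neg"
  have "\<bar>q i - x i - e i\<bar> \<le> \<eta>" if "i < m" for i
  proof -
    have "\<bar>q i - x i - e i\<bar> = \<bar>(1 - t) * (q_pos i - x i - e i) + t * (q_neg i - x i - e i)\<bar>"
      using that \<open>m < n\<close> by (simp add: q_def lerp_Rn_def algebra_simps)
    also have "\<dots> \<le> (1 - t) * \<bar>q_pos i - x i - e i\<bar> + t * \<bar>q_neg i - x i - e i\<bar>"
      using t by (simp add: abs_triangle_ineq[THEN order_trans] abs_mult)
    also have "\<dots> \<le> (1 - t) * \<eta> + t * \<eta>"
      using t near that by (intro add_mono mult_left_mono) auto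
    finally show ?thesis by (simp add: algebra_simps)
  qed
  moreover have "q i = x i" if "m \<le> i" "i < n" for i
    using that t_hits q_pos(2) q_neg(2)
    by (cases "i = m") (auto simp: q_def lerp_Rn_def algebra_simps)
  moreover have "q \<in> K"
    unfolding q_def using convex_Rn_lerp[OF conv q_pos(1) q_neg(1) t] .
  ultimately show "\<exists>q\<in>K. (\<forall>i<m. \<bar>q i - x i - (if s i then \<epsilon> else - \<epsilon>)\<bar> \<le> \<eta>) \<and>
      (\<forall>i. m \<le> i \<and> i < n \<longrightarrow> q i = x i)"
    unfolding e_def by blast
qed

lemma convex_Rn_mem_if_cube_approx:
  assumes conv: "convex_Rn n K" and x: "x \<in> Rn n" and "\<eta> < \<epsilon>"
    and approx: "cube_approx n K x \<epsilon> \<eta> n"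
  shows "x \<in> K"
proof -
  have "cube_approx n K x \<epsilon> \<eta> m" if "m \<le> n" for m
    using that
  proof (induction m rule: inc_induct)
    case base
    show ?case by (rule approx)
  next
    case (step m)
    then show ?case using cube_approx_Suc_imp[OF conv \<open>\<eta> < \<epsilon>\<close>] by simp
  qed
  then have "cube_approx n K x \<epsilon> \<eta> 0" by simp
  then obtain q where q: "q \<in> K" "\<And>i. i < n \<Longrightarrow> q i = x i"
    unfolding cube_approx_def by (elim allE[of _ "\<lambda>_. True"]) auto
  have "q \<in> Rn n"
    using q(1) conv unfolding convex_Rn_def by blast
  then have "q = x"
    using x q(2) unfolding Rn_def by (intro PiE_ext) auto
  with q(1) show ?thesis by simp
qed

lemma convex_Rn_far_cube_vertex:
  assumes conv: "convex_Rn n K" and x: "x \<in> Rn n" "x \<notin> K" and \<eta>: "0 \<le> \<eta>" "\<eta> < \<epsilon>"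
  shows "\<exists>z. (\<forall>i. (z i - x i)\<^sup>2 = \<epsilon>\<^sup>2) \<and> (\<forall>q\<in>K. \<eta>\<^sup>2 \<le> sqdist_Rn n q z)"
proof -
  have "\<not> cube_approx n K x \<epsilon> \<eta> n"
    using convex_Rn_mem_if_cube_approx[OF conv x(1) \<eta>(2)] x(2) by blast
  then obtain s :: "nat \<Rightarrow> bool"
    where s: "\<And>q. q \<in> K \<Longrightarrow> \<exists>i<n. \<eta> < \<bar>q i - x i - (if s i then \<epsilon> else - \<epsilon>)\<bar>"
    unfolding cube_approx_def by (auto simp: not_le)
  define z where "z i = x i + (if s i then \<epsilon> else - \<epsilon>)" for i
  have "\<eta>\<^sup>2 \<le> sqdist_Rn n q z" if q: "q \<in> K" for q
  proof -
    obtain i where i: "i < n" "\<eta> < \<bar>q i - z i\<bar>"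
      using s[OF q] by (auto simp: z_def algebra_simps)
    have "\<eta>\<^sup>2 \<le> \<bar>q i - z i\<bar>\<^sup>2"
      using i \<eta> by (intro power_mono) auto
    also have "\<dots> \<le> sqdist_Rn n q z"
      using sqdist_Rn_ge_coordinate[OF i(1)] by simp
    finally show ?thesis .
  qed
  moreover have "(z i - x i)\<^sup>2 = \<epsilon>\<^sup>2" for i
    by (simp add: z_def)
  ultimately show ?thesis by blast
qed

lemma convex_Rn_approx_separation:
  assumes conv: "convex_Rn n K" and x: "x \<in> Rn n" "x \<notin> K" and n: "0 < n" and \<rho>: "0 < \<rho>"
  shows "\<exists>v. (\<Sum>i<n. (v i)\<^sup>2) = 1 \<and> (\<forall>y\<in>K. inner_Rn n v y \<le> inner_Rn n v x + \<rho>)"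
proof (cases "K = {}")
  case True
  have "(\<Sum>i<n. (if i = 0 then 1 else 0 :: real)\<^sup>2) = 1"
    using n by (simp add: if_distrib[of "\<lambda>t. t\<^sup>2"] cong: if_cong)
  with True show ?thesis by (intro exI[of _ "\<lambda>i. if i = 0 then 1 else 0"]) simp
next
  case False
  define \<epsilon> where "\<epsilon> = \<rho> / sqrt n"
  have \<epsilon>: "0 < \<epsilon>"
    using n \<rho> by (simp add: \<epsilon>_def)
  then obtain z where z: "\<And>i. (z i - x i)\<^sup>2 = \<epsilon>\<^sup>2" and far: "\<And>q. q \<in> K \<Longrightarrow> (\<epsilon> / 2)\<^sup>2 \<le> sqdist_Rn n q z"
    using convex_Rn_far_cube_vertex[OF conv x, of "\<epsilon> / 2" \<epsilon>] by auto
  obtain w where w: "0 < (\<Sum>i<n. (w i)\<^sup>2)" "\<And>y. y \<in> K \<Longrightarrow> inner_Rn n w y < inner_Rn n w z"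
    using convex_Rn_separate_distant_point[OF conv False _ far] \<epsilon> by auto
  define v where "v i = w i / sqrt (\<Sum>i<n. (w i)\<^sup>2)" for i
  have v: "(\<Sum>i<n. (v i)\<^sup>2) = 1"
    using w(1) by (simp add: v_def power_divide sum_divide_distrib[symmetric])
  have "inner_Rn n v z - inner_Rn n v x = inner_Rn n v (\<lambda>i. z i - x i)"
    by (simp add: inner_Rn_def sum_subtractf[symmetric] right_diff_distrib)
  also have "\<dots> \<le> enorm n (\<lambda>i. z i - x i)"
    using abs_inner_Rn_le_enorm[OF v] by (rule abs_le_D1)
  also have "\<dots> = sqrt (real n * \<epsilon>\<^sup>2)"
    by (simp add: enorm_def z)
  also have "\<dots> = \<rho>"
    using n \<rho> by (simp add: \<epsilon>_def real_sqrt_mult power_divide)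
  finally have "inner_Rn n v z \<le> inner_Rn n v x + \<rho>" by simp
  moreover have "inner_Rn n v y < inner_Rn n v z" if "y \<in> K" for y
    using w that by (simp add: v_def inner_Rn_def sum_divide_distrib[symmetric] divide_strict_right_mono)
  ultimately show ?thesis
    using v by force
qed

section \<open>Gaussian linear forms\<close>

abbreviation std_normal_measure :: "real measure" where
  "std_normal_measure \<equiv> density lborel std_normal_density"

abbreviation gauss_prod :: "nat \<Rightarrow> (nat \<Rightarrow> real) measure" where
  "gauss_prod n \<equiv> PiM {..<n} (\<lambda>_. std_normal_measure)"

lemma prob_space_std_normal_measure: "prob_space std_normal_measure"
  by (rule prob_space_normal_density) simp

lemma prob_space_gauss_prod: "prob_space (gauss_prod n)"
  by (intro prob_space_PiM prob_space_std_normal_measure)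

lemma prob_space_gauss: "prob_space (gauss n)"
  unfolding gauss_def by (rule prob_space.prob_space_completion[OF prob_space_gauss_prod])

lemma distributed_gauss_if_gauss_prod:
  assumes D: "distributed (gauss_prod n) lborel X f"
  shows "distributed (gauss n) lborel X f"
proof -
  have m: "X \<in> gauss_prod n \<rightarrow>\<^sub>M lborel"
    using D by (simp add: distributed_def)
  show ?thesis
    using D distr_completion[OF m] measurable_completion[OF m]
    unfolding distributed_def gauss_def by simp
qed

lemma gauss_prod_coordinate_distr:
  assumes "i < n"
  shows "distr (gauss_prod n) borel (\<lambda>g. g i) = std_normal_measure"
proof -
  have "distr (gauss_prod n) borel (\<lambda>g. g i) = distr (gauss_prod n) std_normal_measure (\<lambda>g. g i)"
    by (rule distr_cong) auto
  also have "\<dots> = std_normal_measure"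
    using assms by (intro distr_PiM_component prob_space_std_normal_measure) auto
  finally show ?thesis .
qed

lemma gauss_prod_coordinate_distributed:
  assumes "i < n"
  shows "distributed (gauss_prod n) lborel (\<lambda>g. g i) std_normal_density"
proof -
  have "distr (gauss_prod n) lborel (\<lambda>g. g i) = distr (gauss_prod n) borel (\<lambda>g. g i)"
    by (rule distr_cong) auto
  then show ?thesis
    using gauss_prod_coordinate_distr[OF assms] assms unfolding distributed_def by auto
qed

lemma gauss_coordinate_distributed:
  "i < n \<Longrightarrow> distributed (gauss n) lborel (\<lambda>g. g i) std_normal_density"
  by (intro distributed_gauss_if_gauss_prod gauss_prod_coordinate_distributed)

lemma gauss_prod_coordinates_indep:
  assumes "0 < n"
  shows "prob_space.indep_vars (gauss_prod n) (\<lambda>_. borel) (\<lambda>i g. g i) {..<n}"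
proof -
  interpret P: prob_space "gauss_prod n" by (rule prob_space_gauss_prod)
  have "distr (gauss_prod n) (\<Pi>\<^sub>M i\<in>{..<n}. borel) (\<lambda>g. \<lambda>i\<in>{..<n}. g i)
      = distr (gauss_prod n) (gauss_prod n) (\<lambda>g. g)"
    by (rule distr_cong) (auto simp: space_PiM intro!: sets_PiM_cong)
  also have "\<dots> = gauss_prod n"
    by (rule distr_id2) simp
  also have "\<dots> = (\<Pi>\<^sub>M i\<in>{..<n}. distr (gauss_prod n) borel (\<lambda>g. g i))"
    by (rule PiM_cong) (auto simp: gauss_prod_coordinate_distr)
  finally show ?thesis
    using assms by (subst P.indep_vars_iff_distr_eq_PiM') auto
qed

lemma gauss_linear_form_distributed:
  assumes v: "(\<Sum>i<n. (v i)\<^sup>2) = 1"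
  shows "distributed (gauss n) lborel (\<lambda>g. \<Sum>i<n. v i * g i) std_normal_density"
proof (rule distributed_gauss_if_gauss_prod)
  interpret P: prob_space "gauss_prod n" by (rule prob_space_gauss_prod)
  define J where "J = {i. i < n \<and> v i \<noteq> 0}"
  have J: "J \<subseteq> {..<n}" "finite J"
    by (auto simp: J_def)
  have sum_J: "(\<Sum>i\<in>J. f i) = (\<Sum>i<n. f i)" if "\<And>i. v i = 0 \<Longrightarrow> f i = 0" for f :: "nat \<Rightarrow> 'a::comm_monoid_add"
    using that by (intro sum.mono_neutral_left) (auto simp: J_def)
  have "J \<noteq> {}"
    using v sum_J[of "\<lambda>i. (v i)\<^sup>2"] by auto
  then have "0 < n" using J by auto
  have indep: "P.indep_vars (\<lambda>_. borel) (\<lambda>i g. v i * g i) J"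
    using P.indep_vars_compose2[OF P.indep_vars_subset[OF gauss_prod_coordinates_indep[OF \<open>0 < n\<close>] J(1)],
        of "\<lambda>i x. v i * x" "\<lambda>_. borel"]
    by auto
  have "distributed (gauss_prod n) lborel (\<lambda>g. v i * g i) (normal_density 0 \<bar>v i\<bar>)" if "i \<in> J" for i
  proof -
    have "i < n" "v i \<noteq> 0" using that by (auto simp: J_def)
    from P.normal_density_affine[OF gauss_prod_coordinate_distributed[OF this(1)], of "v i" 0, OF _ this(2)]
    show ?thesis by simp
  qed
  then have "distributed (gauss_prod n) lborel (\<lambda>g. \<Sum>i\<in>J. v i * g i)
      (normal_density (\<Sum>i\<in>J. 0) (sqrt (\<Sum>i\<in>J. \<bar>v i\<bar>\<^sup>2)))"
    using J \<open>J \<noteq> {}\<close> indep by (intro P.sum_indep_normal) (auto simp: J_def)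
  moreover have "(\<lambda>g. \<Sum>i\<in>J. v i * g i) = (\<lambda>g. \<Sum>i<n. v i * g i)"
    by (intro ext sum_J) simp
  ultimately show "distributed (gauss_prod n) lborel (\<lambda>g. \<Sum>i<n. v i * g i) std_normal_density"
    using v sum_J[of "\<lambda>i. (v i)\<^sup>2"] by simp
qed

lemma std_normal_density_le_half: "std_normal_density x \<le> 1 / 2"
proof -
  have "2 \<le> sqrt (2 * pi)"
    using pi_gt3 by (intro real_le_rsqrt) auto
  then have "1 / sqrt (2 * pi) \<le> 1 / 2"
    by (simp add: field_simps)
  moreover have "exp (- x\<^sup>2 / 2) \<le> 1" by simp
  ultimately have "1 / sqrt (2 * pi) * exp (- x\<^sup>2 / 2) \<le> 1 / 2 * 1"
    by (intro mult_mono) auto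
  then show ?thesis unfolding std_normal_density_def by simp
qed

lemma indicator_mul_le_majorant:
  fixes y a C :: real
  assumes "k \<Longrightarrow> y \<le> a" "0 \<le> a" "0 < C"
  shows "(if k then y else 0) \<le> (y - \<bar>y\<bar>) / 2 + a + (if \<not> k \<and> y < 0 then C else 0) + y\<^sup>2 / C"
proof -
  have sq: "0 \<le> y\<^sup>2 / C" using assms(3) by simp
  have neg: "0 \<le> y + C + y\<^sup>2 / C"
  proof -
    have "0 \<le> (C + y / 2)\<^sup>2 + 3 / 4 * y\<^sup>2" by simp
    also have "\<dots> = C * (y + C + y\<^sup>2 / C)"
      using assms(3) by (simp add: power2_eq_square field_simps)
    finally show ?thesis using assms(3) by (simp add: zero_le_mult_iff)
  qed
  show ?thesis
    using assms sq neg by (cases k; cases "y < 0"; simp add: abs_if; linarith)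
qed

context prob_space
begin

lemma std_normal_expectation:
  assumes D: "distributed M lborel Y std_normal_density" and g: "g \<in> borel_measurable borel"
  shows "integrable M (\<lambda>x. g (Y x)) \<longleftrightarrow> integrable lborel (\<lambda>x. std_normal_density x * g x)"
    and "expectation (\<lambda>x. g (Y x)) = (\<integral>x. std_normal_density x * g x \<partial>lborel)"
  using distributed_integrable[OF D, of g] distributed_integral[OF D, of g] g by auto

lemma std_normal_moments:
  assumes D: "distributed M lborel Y std_normal_density"
  shows "integrable M Y" "expectation Y = 0"
    and "integrable M (\<lambda>x. (Y x)\<^sup>2)" "expectation (\<lambda>x. (Y x)\<^sup>2) = 1"
    and "integrable M (\<lambda>x. \<bar>Y x\<bar>)" "expectation (\<lambda>x. \<bar>Y x\<bar>) = sqrt (2 / pi)"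
  using std_normal_expectation[OF D, of "\<lambda>x. x"] std_normal_expectation[OF D, of "\<lambda>x. x\<^sup>2"]
    std_normal_expectation[OF D, of "\<lambda>x. \<bar>x\<bar>"]
    integrable_std_normal_moment[of 1] integral_std_normal_moment_odd[of 0]
    integrable_std_normal_moment[of 2] integral_std_normal_moment_even[of 1]
    integrable_std_normal_moment_abs[of 1] integral_std_normal_moment_abs_odd[of 0]
  by simp_all

lemma std_normal_prob:
  assumes D: "distributed M lborel Y std_normal_density" and A: "A \<in> sets borel"
  shows "prob {x \<in> space M. Y x \<in> A} = (\<integral>x. std_normal_density x * indicator A x \<partial>lborel)"
proof -
  have "prob {x \<in> space M. Y x \<in> A} = expectation (indicator {x \<in> space M. Y x \<in> A})"
    by (simp add: Int_absorb2 subset_iff)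
  also have "\<dots> = expectation (\<lambda>x. indicator A (Y x) :: real)"
    by (rule Bochner_Integration.integral_cong) (auto simp: indicator_def)
  also have "\<dots> = (\<integral>x. std_normal_density x * indicator A x \<partial>lborel)"
    using A std_normal_expectation(2)[OF D, of "indicator A"] by auto
  finally show ?thesis .
qed

lemma std_normal_prob_neg_le:
  assumes D: "distributed M lborel Y std_normal_density"
  shows "prob {x \<in> space M. Y x < 0} \<le> 1 / 2"
proof -
  let ?\<phi> = std_normal_density
  have i_neg: "integrable lborel (\<lambda>x. ?\<phi> x * indicator {..<0} x)"
    and i_pos: "integrable lborel (\<lambda>x. ?\<phi> x * indicator {0<..} x)"
    by (intro integrable_real_mult_indicator; simp)+
  have "(\<integral>x. ?\<phi> x * indicator {..<0} x \<partial>lborel) = (\<integral>x. ?\<phi> (- x) * indicator {..<0} (- x) \<partial>lborel)"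
    using lborel_integral_real_affine[of "-1" "\<lambda>x. ?\<phi> x * indicator {..<0} x" 0] by simp
  also have "\<dots> = (\<integral>x. ?\<phi> x * indicator {0<..} x \<partial>lborel)"
    by (intro Bochner_Integration.integral_cong) (auto simp: std_normal_density_def indicator_def)
  finally have symm: "(\<integral>x. ?\<phi> x * indicator {..<0} x \<partial>lborel) = (\<integral>x. ?\<phi> x * indicator {0<..} x \<partial>lborel)" .
  have "(\<integral>x. ?\<phi> x * indicator {..<0} x \<partial>lborel) + (\<integral>x. ?\<phi> x * indicator {0<..} x \<partial>lborel)
      = (\<integral>x. ?\<phi> x * indicator {..<0} x + ?\<phi> x * indicator {0<..} x \<partial>lborel)"
    using i_neg i_pos by simp
  also have "\<dots> \<le> (\<integral>x. ?\<phi> x \<partial>lborel)"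
    using i_neg i_pos by (intro integral_mono) (auto simp: indicator_def)
  also have "\<dots> = 1" by simp
  finally have "(\<integral>x. ?\<phi> x * indicator {..<0} x \<partial>lborel) \<le> 1 / 2"
    using symm by simp
  then show ?thesis
    using std_normal_prob[OF D, of "{..<0}"] by simp
qed

lemma std_normal_prob_Icc_le:
  assumes D: "distributed M lborel Y std_normal_density" and a: "0 \<le> a"
  shows "prob {x \<in> space M. Y x \<in> {0..a}} \<le> a"
proof -
  have "prob {x \<in> space M. Y x \<in> {0..a}} = (\<integral>x. std_normal_density x * indicator {0..a} x \<partial>lborel)"
    by (rule std_normal_prob[OF D]) simp
  also have "\<dots> \<le> (\<integral>x. indicator {0..a} x \<partial>lborel)"
  proof (intro integral_mono)
    show "integrable lborel (\<lambda>x. std_normal_density x * indicator {0..a} x)"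
      by (intro integrable_real_mult_indicator) auto
    show "integrable lborel (\<lambda>x. indicator {0..a} x :: real)"
      using a by (simp add: emeasure_lborel_Icc_eq)
    show "std_normal_density x * indicator {0..a} x \<le> indicator {0..a} x" for x
      using std_normal_density_le_half[of x] by (auto simp: indicator_def)
  qed
  also have "\<dots> = a" using a by simp
  finally show ?thesis .
qed

lemma prob_neg_diff_le:
  assumes D: "distributed M lborel Y std_normal_density"
    and K: "K \<in> events" and sub: "\<And>x. x \<in> K \<Longrightarrow> Y x \<le> a" and a: "0 \<le> a"
    and vol: "1 / 2 - b \<le> prob K"
  shows "prob ({x \<in> space M. Y x < 0} - K) \<le> b + a"
proof -
  have Y[measurable]: "Y \<in> borel_measurable M"
    using D by (simp add: distributed_def)
  define S where "S = {x \<in> space M. Y x < 0}"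
  define T where "T = {x \<in> space M. Y x \<in> {0..a}}"
  have ev: "S \<in> events" "T \<in> events"
    by (auto simp: S_def T_def)
  have "prob K \<le> prob ((K \<inter> S) \<union> T)"
    using sets.sets_into_space[OF K] sub ev K by (intro finite_measure_mono) (auto simp: S_def T_def not_less)
  also have "\<dots> \<le> prob (K \<inter> S) + prob T"
    using ev K by (intro measure_Un_le) auto
  finally have "prob K \<le> prob (K \<inter> S) + prob T" .
  moreover have "prob (S - K) = prob S - prob (K \<inter> S)"
  proof -
    have "S - K = S - K \<inter> S" by blast
    then show ?thesis using ev K by (simp add: finite_measure_Diff)
  qed
  moreover have "prob S \<le> 1 / 2" "prob T \<le> a"
    using std_normal_prob_neg_le[OF D] std_normal_prob_Icc_le[OF D a] by (simp_all add: S_def T_def)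
  ultimately show ?thesis
    using vol by (simp add: S_def)
qed

text \<open>On \<open>K \<subseteq> {Y \<le> a}\<close>, of measure about \<open>1/2\<close>, the best one can do is \<open>K \<approx> {Y < 0}\<close>, with
  \<open>E[1\<^sub>K Y] \<approx> E[min Y 0] = -E|Y|/2\<close>; the error terms come from a pointwise majorant.\<close>
lemma expectation_indicator_mul_std_normal_le:
  assumes D: "distributed M lborel Y std_normal_density"
    and K: "K \<in> events" and sub: "\<And>x. x \<in> K \<Longrightarrow> Y x \<le> a" and a: "0 \<le> a"
    and vol: "1 / 2 - b \<le> prob K" and C: "0 < C"
  shows "expectation (\<lambda>x. indicator K x * Y x) \<le> - sqrt (2 / pi) / 2 + a + C * (b + a) + 1 / C"
proof -
  have Y[measurable]: "Y \<in> borel_measurable M"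
    using D by (simp add: distributed_def)
  note moments = std_normal_moments[OF D]
  define B where "B = {x \<in> space M. Y x < 0} - K"
  have B: "B \<in> events"
    using K by (auto simp: B_def)
  define R where "R x = (Y x - \<bar>Y x\<bar>) / 2 + a + C * indicator B x + (Y x)\<^sup>2 / C" for x
  have int_B: "integrable M (indicator B :: _ \<Rightarrow> real)"
    using B by (intro integrable_real_indicator) (auto simp: emeasure_eq_measure)
  have "expectation (\<lambda>x. indicator K x * Y x) \<le> expectation R"
  proof (intro integral_mono)
    show "integrable M (\<lambda>x. indicator K x * Y x)"
      using integrable_mult_indicator[OF K moments(1)] by simp
    show "integrable M R"
      unfolding R_def using moments int_B by auto
    show "indicator K x * Y x \<le> R x" if "x \<in> space M" for x
    proof -
      have "indicator K x * Y x = (if x \<in> K then Y x else 0)"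
        by (simp add: indicator_def)
      moreover have "R x = (Y x - \<bar>Y x\<bar>) / 2 + a + (if x \<notin> K \<and> Y x < 0 then C else 0) + (Y x)\<^sup>2 / C"
        using that by (simp add: R_def B_def indicator_def)
      ultimately show ?thesis
        using indicator_mul_le_majorant[of "x \<in> K" "Y x" a C] sub a C by presburger
    qed
  qed
  also have "expectation R = (expectation Y - expectation (\<lambda>x. \<bar>Y x\<bar>)) / 2 + a
      + C * prob B + expectation (\<lambda>x. (Y x)\<^sup>2) / C"
    unfolding R_def using moments int_B B by (simp add: prob_space)
  also have "\<dots> \<le> - sqrt (2 / pi) / 2 + a + C * (b + a) + 1 / C"
    using moments prob_neg_diff_le[OF D K sub a vol] C by (simp add: B_def)
  finally show ?thesis .
qed

end

section \<open>Degree-one Hermite weight\<close>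

lemma W_le1_ge_linear_combination:
  assumes v: "(\<Sum>i<n. (v i)\<^sup>2) = 1"
  shows "(\<Sum>i<n. v i * hermite_coeff1 n f i)\<^sup>2 \<le> W_le1 n f"
proof -
  have "\<bar>\<Sum>i<n. v i * hermite_coeff1 n f i\<bar> \<le> enorm n (hermite_coeff1 n f)"
    using abs_inner_Rn_le_enorm[OF v] by (simp add: inner_Rn_def)
  then have "(\<Sum>i<n. v i * hermite_coeff1 n f i)\<^sup>2 \<le> (enorm n (hermite_coeff1 n f))\<^sup>2"
    by (metis abs_ge_zero power2_abs power_mono)
  also have "\<dots> = (\<Sum>i<n. (hermite_coeff1 n f i)\<^sup>2)"
    by (simp add: enorm_def sum_nonneg)
  also have "\<dots> \<le> W_le1 n f"
    by (simp add: W_le1_def)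
  finally show ?thesis .
qed

lemma hermite_coeff1_linear_combination:
  assumes v: "(\<Sum>i<n. (v i)\<^sup>2) = 1" and K: "K \<in> sets (gauss n)"
  shows "(\<Sum>i<n. v i * hermite_coeff1 n (pm_ind K) i)
    = 2 * (\<integral>g. indicator K g * (\<Sum>i<n. v i * g i) \<partial>gauss n)"
proof -
  interpret G: prob_space "gauss n" by (rule prob_space_gauss)
  define Y where "Y g = (\<Sum>i<n. v i * g i)" for g
  have int_coord: "integrable (gauss n) (\<lambda>g. g i)" if "i < n" for i
    using G.std_normal_moments(1)[OF gauss_coordinate_distributed[OF that]] .
  note moments = G.std_normal_moments[OF gauss_linear_form_distributed[OF v]]
  have pm: "pm_ind K g = 2 * indicator K g - 1" for g
    by (simp add: pm_ind_def indicator_def)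
  have int_pm: "integrable (gauss n) (\<lambda>g. pm_ind K g * g i)" if "i < n" for i
    using integrable_mult_indicator[OF K int_coord[OF that]] int_coord[OF that]
    by (simp add: pm left_diff_distrib mult.assoc)
  have "(\<Sum>i<n. v i * hermite_coeff1 n (pm_ind K) i) = (\<Sum>i<n. G.expectation (\<lambda>g. v i * (pm_ind K g * g i)))"
    by (simp add: hermite_coeff1_def)
  also have "\<dots> = G.expectation (\<lambda>g. \<Sum>i<n. v i * (pm_ind K g * g i))"
    using int_pm by (intro Bochner_Integration.integral_sum[symmetric]) auto
  also have "\<dots> = G.expectation (\<lambda>g. pm_ind K g * Y g)"
    by (simp add: Y_def sum_distrib_left mult.left_commute)
  also have "\<dots> = G.expectation (\<lambda>g. 2 * (indicator K g * Y g) - Y g)"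
    by (simp add: pm algebra_simps)
  also have "\<dots> = 2 * G.expectation (\<lambda>g. indicator K g * Y g)"
    using integrable_mult_indicator[OF K moments(1)] moments(1,2) by (simp add: Y_def)
  finally show ?thesis by (simp add: Y_def)
qed

lemma hermite_coeff1_linear_combination_le_if_halfspace:
  assumes v: "(\<Sum>i<n. (v i)\<^sup>2) = 1" and K: "K \<in> sets (gauss n)"
    and sub: "\<And>y. y \<in> K \<Longrightarrow> inner_Rn n v y \<le> a" and a: "0 \<le> a"
    and vol: "1 / 2 - b \<le> gvol n K" and C: "0 < C"
  shows "(\<Sum>i<n. v i * hermite_coeff1 n (pm_ind K) i) \<le> - sqrt (2 / pi) + 2 * a + 2 * C * (b + a) + 2 / C"
proof -
  interpret G: prob_space "gauss n" by (rule prob_space_gauss)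
  have "G.expectation (\<lambda>g. indicator K g * (\<Sum>i<n. v i * g i))
      \<le> - sqrt (2 / pi) / 2 + a + C * (b + a) + 1 / C"
    using sub vol unfolding inner_Rn_def gvol_def
    by (intro G.expectation_indicator_mul_std_normal_le[OF gauss_linear_form_distributed[OF v] K _ a _ C])
  then show ?thesis
    unfolding hermite_coeff1_linear_combination[OF v K] by simp
qed

lemma sqrt_2_div_pi_ge: "7 / 10 \<le> sqrt (2 / pi)"
proof -
  have "7 / 10 \<le> sqrt (1 / 2 :: real)"
    by (intro real_le_rsqrt) (simp add: power2_eq_square)
  also have "\<dots> \<le> sqrt (2 / pi)"
    using pi_less_4 by (intro real_sqrt_le_mono) (simp add: field_simps)
  finally show ?thesis .
qed

lemma W_le1_ge_if_point_outside_near_origin: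
  assumes n: "1 \<le> n" and \<tau>: "0 < \<tau>" "\<tau> \<le> 1 / 100000"
    and conv: "convex_Rn n K" and vol: "\<bar>gvol n K - 1 / 2\<bar> \<le> \<tau> / real n"
    and x: "x \<in> Rn n" "x \<notin> K" "enorm n x \<le> \<tau>"
  shows "1 / 18 \<le> W_le1 n (pm_ind K)"
proof -
  have "\<tau> / real n \<le> \<tau>"
    using n \<tau> by (simp add: divide_le_eq)
  then have vol': "1 / 2 - \<tau> \<le> gvol n K"
    using vol by linarith
  then have K: "K \<in> sets (gauss n)" \<comment> \<open>non-measurable sets have measure \<open>0\<close>\<close>
    using measure_notin_sets \<tau> unfolding gvol_def by fastforce
  obtain v where v: "(\<Sum>i<n. (v i)\<^sup>2) = 1"
    and sep: "\<And>y. y \<in> K \<Longrightarrow> inner_Rn n v y \<le> inner_Rn n v x + \<tau>"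
    using convex_Rn_approx_separation[OF conv x(1,2), of \<tau>] n \<tau> by auto
  have "inner_Rn n v y \<le> 2 * \<tau>" if "y \<in> K" for y
    using sep[OF that] abs_le_D1[OF abs_inner_Rn_le_enorm[OF v, of x]] x(3) by simp
  from hermite_coeff1_linear_combination_le_if_halfspace[OF v K this _ vol', of 100]
  have "(\<Sum>i<n. v i * hermite_coeff1 n (pm_ind K) i) \<le> - 66 / 100"
    using sqrt_2_div_pi_ge \<tau> by simp
  then have "(66 / 100)\<^sup>2 \<le> \<bar>\<Sum>i<n. v i * hermite_coeff1 n (pm_ind K) i\<bar>\<^sup>2"
    by (intro power_mono) auto
  also have "\<dots> \<le> W_le1 n (pm_ind K)"
    using W_le1_ge_linear_combination[OF v] by simp
  finally show ?thesis by (simp add: power2_eq_square)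
qed

theorem lemma5p4:
  shows "\<exists>\<tau> c :: real. \<exists>n0 :: nat. 0 < \<tau> \<and> \<tau> < 1 / 10000 \<and> c \<ge> \<tau> \<and>
    (\<forall>n \<ge> n0. \<forall>K. convex_Rn n K \<and> \<bar>gvol n K - 1/2\<bar> \<le> c / real n \<and>
        (\<exists>x \<in> Rn n. x \<notin> K \<and> enorm n x \<le> \<tau>)
      \<longrightarrow> W_le1 n (pm_ind K) \<ge> 1/18)"
  using W_le1_ge_if_point_outside_near_origin[of _ "1 / 100000"]
  by (intro exI[of _ "1 / 100000"] exI[of _ 1]) auto

end
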